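(* Let $G=(V,E)$ be a biconnected geodetic graph containing a clique $C\subseteq V$. Then either $G$ is complete, or every vertex $u\in C$ has a neighbour $x_u\notin C$ such that $\{x_u\mid u\in C\}$ is an independent set of size $|C|$.
   Context: All graphs are finite, simple and undirected. A graph is geodetic if between any two vertices there is at most one shortest path. $G$ is biconnected if it is connected and for every $v\in V$ the subgraph induced by $V\setminus\{v\}$ is connected. *)

theory Defs
  imports Main
begin

definition simple_graph :: "'a set \<Rightarrow> ('a \<Rightarrow> 'a \<Rightarrow> bool) \<Rightarrow> bool" where
  "simple_graph V E \<longleftrightarrow> finite V \<and> (\<forall>x y. E x y \<longrightarrow> x \<in> V \<and> y \<in> V)
     \<and> (\<forall>x y. E x y \<longrightarrow> E y x) \<and> (\<forall>x. \<not> E x x)"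

definition walk_in :: "'a set \<Rightarrow> ('a \<Rightarrow> 'a \<Rightarrow> bool) \<Rightarrow> 'a list \<Rightarrow> bool" where
  "walk_in S E p \<longleftrightarrow> p \<noteq> [] \<and> set p \<subseteq> S \<and> (\<forall>i. Suc i < length p \<longrightarrow> E (p ! i) (p ! Suc i))"

definition connected_on :: "'a set \<Rightarrow> ('a \<Rightarrow> 'a \<Rightarrow> bool) \<Rightarrow> bool" where
  "connected_on S E \<longleftrightarrow> (\<forall>u\<in>S. \<forall>v\<in>S. \<exists>p. walk_in S E p \<and> hd p = u \<and> last p = v)"

text \<open>A shortest u-v path in G = (V,E): a u-v walk of minimum length (such a walk
is necessarily a path).\<close>
definition shortest_path :: "'a set \<Rightarrow> ('a \<Rightarrow> 'a \<Rightarrow> bool) \<Rightarrow> 'a \<Rightarrow> 'a \<Rightarrow> 'a list \<Rightarrow> bool" where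
  "shortest_path V E u v p \<longleftrightarrow> walk_in V E p \<and> hd p = u \<and> last p = v \<and>
     (\<forall>q. walk_in V E q \<and> hd q = u \<and> last q = v \<longrightarrow> length p \<le> length q)"

definition geodetic :: "'a set \<Rightarrow> ('a \<Rightarrow> 'a \<Rightarrow> bool) \<Rightarrow> bool" where
  "geodetic V E \<longleftrightarrow> (\<forall>u\<in>V. \<forall>v\<in>V. \<forall>p q. shortest_path V E u v p \<and> shortest_path V E u v q \<longrightarrow> p = q)"

definition biconnected :: "'a set \<Rightarrow> ('a \<Rightarrow> 'a \<Rightarrow> bool) \<Rightarrow> bool" where
  "biconnected V E \<longleftrightarrow> connected_on V E \<and> (\<forall>v\<in>V. connected_on (V - {v}) E)"

definition clique :: "'a set \<Rightarrow> ('a \<Rightarrow> 'a \<Rightarrow> bool) \<Rightarrow> 'a set \<Rightarrow> bool" where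
  "clique V E C \<longleftrightarrow> C \<subseteq> V \<and> (\<forall>x\<in>C. \<forall>y\<in>C. x \<noteq> y \<longrightarrow> E x y)"

definition independent :: "'a set \<Rightarrow> ('a \<Rightarrow> 'a \<Rightarrow> bool) \<Rightarrow> 'a set \<Rightarrow> bool" where
  "independent V E I \<longleftrightarrow> I \<subseteq> V \<and> (\<forall>x\<in>I. \<forall>y\<in>I. \<not> E x y)"

definition complete_graph :: "'a set \<Rightarrow> ('a \<Rightarrow> 'a \<Rightarrow> bool) \<Rightarrow> bool" where
  "complete_graph V E \<longleftrightarrow> (\<forall>x\<in>V. \<forall>y\<in>V. x \<noteq> y \<longrightarrow> E x y)"

end

theory Submission
  imports Defs
begin

text \<open>In a geodetic graph two non-adjacent vertices have at most one common neighbour.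
Consequently a vertex u of the clique C without a private neighbour (a neighbour outside C
adjacent to no other vertex of C) would be simplicial, i.e. have a complete neighbourhood.
In a biconnected, non-complete geodetic graph no vertex u is simplicial: let y be the first
step of the geodesic from u to some non-neighbour w. Crossing an edge ab with a not adjacent
to u and b \<noteq> u never changes the first step of the geodesic from u; the only
delicate case, geodesics to a and b of equal length, would give two adjacent first steps, and
uniqueness of the geodesic from y to b then produces a shortcut. So a path from w to u
avoiding y, which exists by biconnectivity, can never reach u. Finally, by the uniqueness of
common neighbours, private neighbours of distinct clique vertices are distinct and
non-adjacent.\<close>

lemma walk_in_iff_successively:
  "walk_in S E p \<longleftrightarrow> p \<noteq> [] \<and> set p \<subseteq> S \<and> successively E p"
  unfolding walk_in_def successively_conv_nth by blast

lemma walk_in_hd_last: "walk_in S E p \<Longrightarrow> hd p \<in> S \<and> last p \<in> S"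
  unfolding walk_in_def by auto

lemma walk_in_snoc: "walk_in S E p \<Longrightarrow> b \<in> S \<Longrightarrow> E (last p) b \<Longrightarrow> walk_in S E (p @ [b])"
  unfolding walk_in_iff_successively by (auto simp: successively_append_iff)

lemma walk_in_Cons: "walk_in S E p \<Longrightarrow> a \<in> S \<Longrightarrow> E a (hd p) \<Longrightarrow> walk_in S E (a # p)"
  unfolding walk_in_iff_successively by (auto simp: successively_Cons)

lemma walk_in_drop:
  assumes "walk_in S E p" "n < length p"
  shows "walk_in S E (drop n p)"
proof -
  have "successively E (take n p @ drop n p)"
    using assms by (simp add: walk_in_iff_successively)
  then have "successively E (drop n p)"
    by (simp only: successively_append_iff)
  then show ?thesis
    using assms set_drop_subset by (fastforce simp: walk_in_iff_successively)
qed

lemma walk_in_last_closed: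
  assumes "walk_in S E p" "hd p \<in> T"
    and closed: "\<And>a b. a \<in> T \<Longrightarrow> b \<in> S \<Longrightarrow> E a b \<Longrightarrow> b \<in> T"
  shows "last p \<in> T"
  using assms(1,2)
proof (induction p)
  case Nil
  then show ?case by (simp add: walk_in_def)
next
  case (Cons x xs)
  show ?case
  proof (cases xs)
    case Nil
    then show ?thesis using Cons.prems by simp
  next
    case (Cons y ys)
    then have "walk_in S E xs" "E x y"
      using Cons.prems(1) by (auto simp: walk_in_iff_successively)
    moreover have "y \<in> T"
      using closed \<open>xs = y # ys\<close> Cons.prems walk_in_hd_last[OF \<open>walk_in S E xs\<close>] \<open>E x y\<close> by auto
    ultimately show ?thesis using Cons.IH \<open>xs = y # ys\<close> by simp
  qed
qed

definition simplicial :: "('a \<Rightarrow> 'a \<Rightarrow> bool) \<Rightarrow> 'a \<Rightarrow> bool" where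
  "simplicial E u \<longleftrightarrow> (\<forall>a b. E u a \<longrightarrow> E u b \<longrightarrow> a \<noteq> b \<longrightarrow> E a b)"

definition private_neighbour :: "('a \<Rightarrow> 'a \<Rightarrow> bool) \<Rightarrow> 'a set \<Rightarrow> 'a \<Rightarrow> 'a \<Rightarrow> bool" where
  "private_neighbour E C u x \<longleftrightarrow> E u x \<and> x \<notin> C \<and> (\<forall>c\<in>C - {u}. \<not> E x c)"

lemma private_neighbours_inj_on:
  assumes "simple_graph V E" "\<forall>u\<in>C. private_neighbour E C u (x u)"
  shows "inj_on x C"
proof (rule inj_onI, rule ccontr)
  fix u v
  assume "u \<in> C" "v \<in> C" "x u = x v" "u \<noteq> v"
  then have "\<not> E (x v) v" "E v (x v)"
    using assms(2) unfolding private_neighbour_def by force+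
  then show False
    using assms(1) unfolding simple_graph_def by blast
qed

locale connected_geodetic_graph =
  fixes V :: "'a set" and E :: "'a \<Rightarrow> 'a \<Rightarrow> bool"
  assumes simple: "simple_graph V E"
    and geodetic: "geodetic V E"
    and connected: "connected_on V E"
begin

lemma edge_sym: "E a b \<Longrightarrow> E b a"
  using simple unfolding simple_graph_def by blast

lemma edge_irrefl: "\<not> E a a"
  using simple unfolding simple_graph_def by blast

lemma edge_in_V: "E a b \<Longrightarrow> a \<in> V \<and> b \<in> V"
  using simple unfolding simple_graph_def by blast

definition geodesic :: "'a \<Rightarrow> 'a \<Rightarrow> 'a list" where
  "geodesic s t = (THE p. shortest_path V E s t p)"

lemma shortest_path_exists:
  assumes "s \<in> V" "t \<in> V"
  shows "\<exists>p. shortest_path V E s t p"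
proof -
  obtain q where "walk_in V E q \<and> hd q = s \<and> last q = t"
    using connected assms unfolding connected_on_def by blast
  then show ?thesis
    using ex_has_least_nat[where P = "\<lambda>p. walk_in V E p \<and> hd p = s \<and> last p = t" and m = length]
    unfolding shortest_path_def by auto
qed

lemma shortest_path_geodesic:
  assumes "s \<in> V" "t \<in> V"
  shows "shortest_path V E s t (geodesic s t)"
proof -
  have "\<exists>!p. shortest_path V E s t p"
    using shortest_path_exists[OF assms] geodetic assms unfolding geodetic_def by blast
  then show ?thesis
    unfolding geodesic_def by (rule theI')
qed

lemma walk_geodesic:
  "s \<in> V \<Longrightarrow> t \<in> V \<Longrightarrow> walk_in V E (geodesic s t) \<and> hd (geodesic s t) = s \<and> last (geodesic s t) = t"
  using shortest_path_geodesic unfolding shortest_path_def by blast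

lemma length_geodesic_le:
  "walk_in V E p \<Longrightarrow> hd p = s \<Longrightarrow> last p = t \<Longrightarrow> length (geodesic s t) \<le> length p"
  using shortest_path_geodesic walk_in_hd_last unfolding shortest_path_def by blast

lemma geodesic_eqI:
  assumes "walk_in V E p" "hd p = s" "last p = t" "length p \<le> length (geodesic s t)"
  shows "p = geodesic s t"
proof -
  have V: "s \<in> V" "t \<in> V"
    using walk_in_hd_last assms by blast+
  have "shortest_path V E s t p"
    unfolding shortest_path_def using assms length_geodesic_le[of _ s t] by fastforce
  then show ?thesis
    using shortest_path_geodesic[OF V] geodetic V unfolding geodetic_def by blast
qed

lemma length_geodesic_distinct:
  assumes "s \<in> V" "t \<in> V" "s \<noteq> t"
  shows "2 \<le> length (geodesic s t)"
proof -
  have "walk_in V E (geodesic s t)" "hd (geodesic s t) = s" "last (geodesic s t) = t"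
    using walk_geodesic assms by auto
  moreover have "length p = 1 \<Longrightarrow> hd p = last p" for p :: "'a list"
    by (auto simp: length_Suc_conv)
  ultimately have "geodesic s t \<noteq> []" "length (geodesic s t) \<noteq> 1"
    using assms(3) by (auto simp: walk_in_def)
  then show ?thesis
    by (cases "length (geodesic s t)") auto
qed

lemma geodesic_edge:
  assumes "E s t"
  shows "geodesic s t = [s, t]"
proof -
  have "s \<in> V" "t \<in> V" "s \<noteq> t"
    using edge_in_V edge_irrefl assms by auto
  then have "walk_in V E [s, t]" "length [s, t] \<le> length (geodesic s t)"
    using assms length_geodesic_distinct[of s t] by (auto simp: walk_in_def less_Suc_eq)
  then show ?thesis
    using geodesic_eqI by force
qed

lemma length_geodesic_nonadjacent:
  assumes "s \<in> V" "t \<in> V" "s \<noteq> t" "\<not> E s t"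
  shows "3 \<le> length (geodesic s t)"
proof -
  have "walk_in V E (geodesic s t)" "hd (geodesic s t) = s" "last (geodesic s t) = t"
    using walk_geodesic assms by auto
  moreover have "length p = 2 \<Longrightarrow> p = [hd p, last p]" for p :: "'a list"
    by (auto simp: numeral_2_eq_2 length_Suc_conv)
  ultimately show ?thesis
    using assms length_geodesic_distinct unfolding walk_in_def
    by (metis One_nat_def le_antisym lessI nth_Cons_0 nth_Cons_Suc numeral_2_eq_2 not_less_eq_eq numeral_3_eq_3)
qed

lemma common_neighbour_unique:
  assumes "s \<noteq> t" "\<not> E s t" "E s m1" "E m1 t" "E s m2" "E m2 t"
  shows "m1 = m2"
proof -
  have V: "s \<in> V" "t \<in> V" "m1 \<in> V" "m2 \<in> V"
    using edge_in_V assms by auto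
  have "walk_in V E [s, m1, t]" "walk_in V E [s, m2, t]"
    unfolding walk_in_def using V assms by (auto simp: less_Suc_eq nth_Cons')
  moreover have "length [s, m, t] \<le> length (geodesic s t)" for m
    using length_geodesic_nonadjacent[OF V(1,2) assms(1,2)] by simp
  ultimately have "[s, m1, t] = [s, m2, t]"
    using geodesic_eqI by (metis last.simps list.sel(1) list.distinct(1))
  then show ?thesis by simp
qed

definition first_step :: "'a \<Rightarrow> 'a \<Rightarrow> 'a" where
  "first_step s t = geodesic s t ! 1"

lemma edge_first_step:
  assumes "s \<in> V" "t \<in> V" "s \<noteq> t"
  shows "E s (first_step s t)"
proof -
  have "walk_in V E (geodesic s t)" "hd (geodesic s t) = s" "1 < length (geodesic s t)"
    using walk_geodesic length_geodesic_distinct[of s t] assms by auto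
  then show ?thesis
    unfolding walk_in_def first_step_def by (metis One_nat_def hd_conv_nth)
qed

lemma first_step_edge: "E s t \<Longrightarrow> first_step s t = t"
  by (simp add: first_step_def geodesic_edge)

lemma walk_geodesic_snoc:
  assumes "u \<in> V" "E a b"
  shows "walk_in V E (geodesic u a @ [b]) \<and> hd (geodesic u a @ [b]) = u \<and> last (geodesic u a @ [b]) = b"
proof -
  have "a \<in> V" "b \<in> V"
    using edge_in_V assms by auto
  then show ?thesis
    using walk_in_snoc[of V E "geodesic u a" b] walk_geodesic[of u a] assms by (auto simp: walk_in_def)
qed

lemma length_geodesic_edge_le:
  "u \<in> V \<Longrightarrow> E a b \<Longrightarrow> length (geodesic u b) \<le> length (geodesic u a) + 1"
  using length_geodesic_le walk_geodesic_snoc by fastforce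

lemma geodesic_snoc:
  "u \<in> V \<Longrightarrow> E a b \<Longrightarrow> length (geodesic u b) = length (geodesic u a) + 1 \<Longrightarrow>
    geodesic u b = geodesic u a @ [b]"
  using geodesic_eqI walk_geodesic_snoc by fastforce

lemma first_step_snoc:
  assumes "u \<in> V" "E a b" "a \<noteq> u" "length (geodesic u b) = length (geodesic u a) + 1"
  shows "first_step u b = first_step u a"
proof -
  have "1 < length (geodesic u a)"
    using length_geodesic_distinct edge_in_V assms by fastforce
  then show ?thesis
    unfolding first_step_def geodesic_snoc[OF assms(1,2,4)] by (simp add: nth_append)
qed

lemma geodesic_nth_nonadjacent:
  assumes "s \<in> V" "t \<in> V" "1 < i" "i < length (geodesic s t)"
  shows "\<not> E s (geodesic s t ! i)"
proof
  let ?P = "geodesic s t"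
  assume "E s (?P ! i)"
  then have "walk_in V E (s # drop i ?P)"
    using walk_in_Cons walk_in_drop walk_geodesic assms by (metis hd_drop_conv_nth)
  moreover have "last (s # drop i ?P) = t"
    using walk_geodesic assms by simp
  ultimately have "length ?P \<le> length (s # drop i ?P)"
    using length_geodesic_le by fastforce
  then show False
    using assms by simp
qed

lemma length_geodesic_via_other_neighbour:
  assumes "E u y" "b \<in> V" "first_step u b \<noteq> y"
  shows "length (geodesic u b) \<le> length (geodesic y b)"
proof (rule ccontr)
  let ?R = "geodesic y b"
  assume shorter: "\<not> ?thesis"
  have R: "walk_in V E ?R" "hd ?R = y" "last ?R = b"
    using walk_geodesic edge_in_V assms by auto
  then have "walk_in V E (u # ?R)"
    using walk_in_Cons edge_in_V assms by metis
  moreover have "length (u # ?R) \<le> length (geodesic u b)"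
    using shorter by simp
  ultimately have "u # ?R = geodesic u b"
    using geodesic_eqI R by (simp add: walk_in_def)
  then have "first_step u b = y"
    unfolding first_step_def using R by (metis hd_conv_nth nth_Cons_Suc One_nat_def walk_in_def)
  then show False
    using assms by simp
qed

lemma first_step_same_level:
  assumes "simplicial E u" "u \<in> V" "E a b" "a \<noteq> u" "\<not> E u a" "b \<noteq> u"
    and "length (geodesic u a) = length (geodesic u b)"
  shows "first_step u b = first_step u a"
proof (rule ccontr)
  define P Q y z where "P = geodesic u a" and "Q = geodesic u b"
    and "y = first_step u a" and "z = first_step u b"
  assume "z \<noteq> y"
  have V: "a \<in> V" "b \<in> V"
    using edge_in_V assms by auto
  have P: "walk_in V E P" "hd P = u" "last P = a" "3 \<le> length P" "P ! 1 = y"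
    using walk_geodesic length_geodesic_nonadjacent[of u a] V assms(2,4,5)
    unfolding P_def y_def first_step_def by auto
  have Q: "walk_in V E Q" "hd Q = u" "last Q = b" "length Q = length P" "Q ! 1 = z"
    using walk_geodesic V assms unfolding P_def Q_def z_def first_step_def by auto
  have "E u y" "E u z"
    using edge_first_step V assms unfolding y_def z_def by auto
  then have "E y z"
    using \<open>simplicial E u\<close> \<open>z \<noteq> y\<close> unfolding simplicial_def by blast
  have tl_nonempty: "tl P \<noteq> []" "tl Q \<noteq> []"
    using P(4) Q(4) by (auto simp flip: length_greater_0_conv)
  then have tl_PQ: "hd (tl P) = y" "hd (tl Q) = z" "last (tl P) = a" "last (tl Q) = b"
    using P(3-5) Q(3-5) by (simp_all add: hd_conv_nth nth_tl last_tl)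
  have W1: "walk_in V E (tl P @ [b])" "hd (tl P @ [b]) = y" "last (tl P @ [b]) = b"
    using walk_in_snoc[OF walk_in_drop[OF P(1), of 1]] V P assms(3) tl_nonempty tl_PQ
    by (auto simp: drop_Suc)
  have W2: "walk_in V E (y # tl Q)" "hd (y # tl Q) = y" "last (y # tl Q) = b"
    using walk_in_Cons[OF walk_in_drop[OF Q(1), of 1]] \<open>E y z\<close> edge_in_V Q P(4) tl_nonempty tl_PQ
    by (auto simp: drop_Suc)
  \<comment> \<open>both walks from y to b have the length of P, and no walk from y to b is shorter\<close>
  have "length P \<le> length (geodesic y b)"
    using length_geodesic_via_other_neighbour \<open>E u y\<close> V \<open>z \<noteq> y\<close> Q(4)
    unfolding Q_def z_def by metis
  then have "tl P @ [b] = y # tl Q"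
    using geodesic_eqI[OF W1] geodesic_eqI[OF W2] P(4) Q(4) by simp
  then have "(tl P @ [b]) ! 1 = (y # tl Q) ! 1"
    by simp
  then have "P ! 2 = z"
    using P(4) Q(4,5) tl_nonempty by (simp add: nth_append nth_tl numeral_2_eq_2 hd_conv_nth split: if_splits)
  then show False
    using geodesic_nth_nonadjacent[of u a 2] \<open>E u z\<close> V P(4) assms(2) unfolding P_def by simp
qed

lemma first_step_propagates:
  assumes "simplicial E u" "u \<in> V" "E a b" "a \<noteq> u" "\<not> E u a" "b \<noteq> u"
  shows "first_step u b = first_step u a"
proof -
  have "length (geodesic u b) \<le> length (geodesic u a) + 1"
    and "length (geodesic u a) \<le> length (geodesic u b) + 1"
    using length_geodesic_edge_le edge_sym assms by blast+
  then consider "length (geodesic u b) = length (geodesic u a) + 1"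
    | "length (geodesic u a) = length (geodesic u b) + 1"
    | "length (geodesic u a) = length (geodesic u b)"
    by linarith
  then show ?thesis
  proof cases
    case 1
    then show ?thesis using first_step_snoc assms by blast
  next
    case 2
    then show ?thesis using first_step_snoc edge_sym assms by metis
  next
    case 3
    then show ?thesis using first_step_same_level assms by blast
  qed
qed

lemma not_simplicial:
  assumes "biconnected V E" "\<not> complete_graph V E" "u \<in> V"
  shows "\<not> simplicial E u"
proof
  assume simplicial: "simplicial E u"
  obtain w where w: "w \<in> V" "w \<noteq> u" "\<not> E u w"
    using assms(2) simplicial edge_sym unfolding complete_graph_def simplicial_def by metis
  define y where "y = first_step u w"
  define T where "T = {v \<in> V. v \<noteq> u \<and> v \<noteq> y \<and> first_step u v = y}"
  have "E u y"
    unfolding y_def using edge_first_step w assms(3) by blast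
  then have "w \<in> T"
    unfolding T_def y_def using w by auto
  moreover obtain p where "walk_in (V - {y}) E p" "hd p = w" "last p = u"
    using assms(1) \<open>E u y\<close> w assms(3) edge_in_V
    unfolding biconnected_def connected_on_def by (metis Diff_iff edge_irrefl singletonD)
  moreover have "b \<in> T" if "a \<in> T" "b \<in> V - {y}" "E a b" for a b
  proof -
    have "\<not> E u a"
      using that(1) first_step_edge unfolding T_def by fastforce
    then have "b \<noteq> u"
      using that(3) edge_sym by blast
    then show ?thesis
      using first_step_propagates[OF simplicial assms(3) that(3)] \<open>\<not> E u a\<close> that
      unfolding T_def by auto
  qed
  ultimately have "u \<in> T"
    using walk_in_last_closed by metis
  then show False
    unfolding T_def by simp
qed

lemma simplicial_if_no_private_neighbour:
  assumes "clique V E C" "u \<in> C" and no_private: "\<forall>x. E u x \<longrightarrow> x \<notin> C \<longrightarrow> (\<exists>c\<in>C - {u}. E x c)"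
  shows "simplicial E u"
proof -
  have clique_edge: "E c d" if "c \<in> C" "d \<in> C" "c \<noteq> d" for c d
    using assms(1) that unfolding clique_def by blast
  have adjacent_to_rest: "E x c" if x: "E u x" "x \<notin> C" and c: "c \<in> C - {u}" for x c
  proof (rule ccontr)
    assume "\<not> E x c"
    obtain c' where "c' \<in> C - {u}" "E x c'"
      using no_private x by blast
    moreover have "c' \<noteq> c" "x \<noteq> c"
      using \<open>\<not> E x c\<close> \<open>E x c'\<close> x(2) c by auto
    ultimately have "u = c'"
      using common_neighbour_unique[of x c u c'] \<open>\<not> E x c\<close> x c clique_edge assms(2) edge_sym
      by auto
    then show False
      using \<open>c' \<in> C - {u}\<close> by simp
  qed
  show ?thesis
    unfolding simplicial_def
  proof (intro allI impI)
    fix a b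
    assume ab: "E u a" "E u b" "a \<noteq> b"
    then have "a \<noteq> u" "b \<noteq> u"
      using edge_irrefl by auto
    consider "a \<in> C" "b \<in> C" | "a \<in> C" "b \<notin> C" | "a \<notin> C" "b \<in> C" | "a \<notin> C" "b \<notin> C"
      by blast
    then show "E a b"
    proof cases
      case 1
      then show ?thesis using clique_edge ab by blast
    next
      case 2
      then show ?thesis using adjacent_to_rest ab \<open>a \<noteq> u\<close> edge_sym by blast
    next
      case 3
      then show ?thesis using adjacent_to_rest ab \<open>b \<noteq> u\<close> by blast
    next
      case 4
      then obtain c where c: "c \<in> C - {u}" "E a c" "E b c"
        using no_private adjacent_to_rest ab by blast
      show ?thesis
      proof (rule ccontr)
        assume "\<not> E a b"
        then have "u = c"
          using common_neighbour_unique[of a b u c] ab c edge_sym by blast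
        then show False
          using c by simp
      qed
    qed
  qed
qed

lemma exists_private_neighbour:
  assumes "biconnected V E" "\<not> complete_graph V E" "clique V E C" "u \<in> C"
  shows "\<exists>x. private_neighbour E C u x"
proof (rule ccontr)
  assume "\<nexists>x. private_neighbour E C u x"
  then have "simplicial E u"
    using simplicial_if_no_private_neighbour[OF assms(3,4)] unfolding private_neighbour_def by blast
  moreover have "u \<in> V"
    using assms(3,4) unfolding clique_def by blast
  ultimately show False
    using not_simplicial[OF assms(1,2)] by blast
qed

lemma private_neighbours_independent:
  assumes "clique V E C" "\<forall>u\<in>C. private_neighbour E C u (x u)"
  shows "independent V E (x ` C)"
  unfolding independent_def
proof (intro conjI ballI)
  show "x ` C \<subseteq> V"
    using assms(2) edge_in_V unfolding private_neighbour_def by blast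
next
  fix p q
  assume "p \<in> x ` C" "q \<in> x ` C"
  then obtain u v where uv: "u \<in> C" "v \<in> C" "p = x u" "q = x v"
    by blast
  show "\<not> E p q"
  proof (cases "u = v")
    case True
    then show ?thesis using uv edge_irrefl by simp
  next
    case False
    have "E u v"
      using assms(1) uv False unfolding clique_def by blast
    moreover have "u \<noteq> x v" "\<not> E u (x v)" "v \<noteq> x u" "E u (x u)" "E v (x v)"
      using assms(2) uv False edge_sym unfolding private_neighbour_def by blast+
    ultimately show ?thesis
      using common_neighbour_unique[of u "x v" v "x u"] uv edge_sym by blast
  qed
qed

end

theorem proposition2:
  fixes V :: "'a set" and E :: "'a \<Rightarrow> 'a \<Rightarrow> bool" and C :: "'a set"
  assumes "simple_graph V E"
    and "biconnected V E"
    and "geodetic V E"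
    and "clique V E C"
  shows "complete_graph V E \<or>
    (\<exists>x. (\<forall>u\<in>C. E u (x u) \<and> x u \<notin> C) \<and> independent V E (x ` C) \<and> card (x ` C) = card C)"
proof (cases "complete_graph V E")
  case False
  interpret connected_geodetic_graph V E
    using assms unfolding connected_geodetic_graph_def biconnected_def by blast
  obtain x where x: "\<forall>u\<in>C. private_neighbour E C u (x u)"
    using exists_private_neighbour[OF assms(2) False assms(4)] by metis
  have "independent V E (x ` C)"
    using private_neighbours_independent[OF assms(4) x] .
  moreover have "card (x ` C) = card C"
    using card_image private_neighbours_inj_on[OF assms(1) x] .
  ultimately show ?thesis
    using x unfolding private_neighbour_def by blast
qed simp

end
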